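(* Let $l_1\le l_2\le\cdots\le l_k$ be nonnegative integers with $L=l_1+\cdots+l_k\ge1$. Write $h_{l_1}(z)\cdots h_{l_k}(z)=\sum_{p\ge0}c_p h_p(z)$. Then $|c_p|\le(2L)^{L-l_k}$ for every $p$.
   Context: $h_j$ denotes the $j$-th monic probabilists' Hermite polynomial: $h_0=1$, $h_1(z)=z$, $h_{j+1}(z)=zh_j(z)-jh_{j-1}(z)$; they are orthogonal under the standard Gaussian measure with $\mathbb E[h_p^2]=p!$. *)

theory Defs
  imports "HOL-Computational_Algebra.Polynomial"
begin

text \<open>Monic probabilists' Hermite polynomials:
  h_0 = 1, h_1 = z, h_(j+1) = z h_j - j h_(j-1).\<close>
fun herm :: "nat \<Rightarrow> real poly" where
  "herm 0 = 1"
| "herm (Suc 0) = [:0, 1:]"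
| "herm (Suc (Suc n)) = [:0, 1:] * herm (Suc n) - smult (real (Suc n)) (herm n)"

end

theory Submission
  imports Defs
begin

text \<open>Multiplication by \<open>z\<close> acts on Hermite expansions by \<open>z h\<^sub>p = h\<^sub>p\<^sub>+\<^sub>1 + p h\<^sub>p\<^sub>-\<^sub>1\<close>, so it
  raises the degree bound \<open>D\<close> by one and the coefficient bound by a factor \<open>D + 1\<close>.
  Feeding this into the three-term recurrence \<open>h\<^sub>m\<^sub>+\<^sub>2 Q = z h\<^sub>m\<^sub>+\<^sub>1 Q - (m + 1) h\<^sub>m Q\<close> shows,
  by induction on \<open>m\<close>, that multiplying by \<open>h\<^sub>m\<close> costs a factor \<open>(2L)\<^sup>m\<close> as long as all
  degrees stay at most \<open>L\<close>. Starting from \<open>h\<^sub>l\<^sub>k\<close> (one coefficient, equal to 1) and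
  multiplying by the remaining factors gives the bound \<open>(2L)\<^sup>L\<^sup>-\<^sup>l\<^sup>k\<close>; the expansion is
  unique because \<open>h\<^sub>p\<close> is monic of degree \<open>p\<close>.\<close>

lemma degree_herm: "degree (herm n) = n" and coeff_herm_self: "coeff (herm n) n = 1"
proof -
  have "degree (herm n) = n \<and> coeff (herm n) n = 1"
  proof (induction n rule: herm.induct)
    case (3 n)
    have deg_le: "degree (herm (Suc (Suc n))) \<le> Suc (Suc n)"
      using 3 degree_mult_le[of "[:0, 1:]" "herm (Suc n)"]
      by (simp add: degree_diff_le)
    have lead: "coeff (herm (Suc (Suc n))) (Suc (Suc n)) = 1"
      using 3 by (simp add: coeff_eq_0)
    then have "Suc (Suc n) \<le> degree (herm (Suc (Suc n)))"
      by (metis le_degree zero_neq_one)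
    with deg_le have "degree (herm (Suc (Suc n))) = Suc (Suc n)"
      by linarith
    with lead show ?case by blast
  qed simp_all
  then show "degree (herm n) = n" "coeff (herm n) n = 1" by simp_all
qed

lemma herm_expansion_eq_0:
  assumes "(\<Sum>p\<le>K. smult (d p) (herm p)) = 0" "p \<le> K"
  shows "d p = 0"
  using assms
proof (induction K)
  case 0
  then show ?case by (simp add: coeff_herm_self)
next
  case (Suc K)
  have "coeff (\<Sum>p\<le>K. smult (d p) (herm p)) (Suc K) = 0"
    by (simp add: coeff_sum coeff_eq_0 degree_herm)
  then have "coeff (\<Sum>p\<le>Suc K. smult (d p) (herm p)) (Suc K) = d (Suc K)"
    by (simp add: coeff_herm_self)
  then have top: "d (Suc K) = 0"
    by (simp only: Suc.prems(1) coeff_0)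
  then have "(\<Sum>p\<le>K. smult (d p) (herm p)) = 0"
    using Suc.prems(1) by simp
  with Suc top show ?case
    by (cases "p = Suc K") simp_all
qed

lemma herm_expansion_extend:
  assumes "\<forall>p>D. b p = 0" "D \<le> D'"
  shows "(\<Sum>p\<le>D. smult (b p) (herm p)) = (\<Sum>p\<le>D'. smult (b p) (herm p))"
  by (rule sum.mono_neutral_left) (use assms in auto)

lemma pX_mult_herm: "[:0, 1:] * herm p = herm (Suc p) + smult (real p) (herm (p - 1))"
  by (cases p) simp_all

definition herm_expansion_bounded :: "real \<Rightarrow> nat \<Rightarrow> real poly \<Rightarrow> bool" where
  "herm_expansion_bounded B D Q \<longleftrightarrow> (\<exists>b. (\<forall>p>D. b p = 0) \<and> (\<forall>p. \<bar>b p\<bar> \<le> B) \<and>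
     Q = (\<Sum>p\<le>D. smult (b p) (herm p)))"

lemma herm_expansion_boundedI:
  assumes "\<forall>p>D. b p = 0" "\<And>p. \<bar>b p\<bar> \<le> B" "Q = (\<Sum>p\<le>D. smult (b p) (herm p))"
  shows "herm_expansion_bounded B D Q"
  unfolding herm_expansion_bounded_def using assms by blast

lemma herm_expansion_boundedE:
  assumes "herm_expansion_bounded B D Q"
  obtains b where "\<forall>p>D. b p = 0" "\<And>p. \<bar>b p\<bar> \<le> B" "Q = (\<Sum>p\<le>D. smult (b p) (herm p))"
  using assms unfolding herm_expansion_bounded_def by blast

lemma herm_expansion_bounded_nonneg:
  assumes "herm_expansion_bounded B D Q"
  shows "0 \<le> B"
proof -
  obtain b where "\<And>p. \<bar>b p\<bar> \<le> B"
    using assms by (elim herm_expansion_boundedE) blast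
  then show ?thesis
    by (meson abs_ge_zero order_trans)
qed

lemma herm_expansion_bounded_herm: "herm_expansion_bounded 1 n (herm n)"
proof (rule herm_expansion_boundedI[where b = "\<lambda>p. if p = n then 1 else 0"])
  have "(\<Sum>p\<le>n. smult (if p = n then 1 else 0) (herm p)) = (\<Sum>p\<le>n. if p = n then herm p else 0)"
    by (intro sum.cong) auto
  then show "herm n = (\<Sum>p\<le>n. smult (if p = n then 1 else 0) (herm p))"
    by simp
qed auto

lemma herm_expansion_bounded_mono:
  assumes "herm_expansion_bounded B D Q" "B \<le> B'" "D \<le> D'"
  shows "herm_expansion_bounded B' D' Q"
proof -
  obtain b where b: "\<forall>p>D. b p = 0" "\<And>p. \<bar>b p\<bar> \<le> B" "Q = (\<Sum>p\<le>D. smult (b p) (herm p))"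
    using assms(1) by (elim herm_expansion_boundedE) blast
  show ?thesis
    using b assms(2,3) herm_expansion_extend[of D b D']
    by (intro herm_expansion_boundedI[of D' b]) (auto intro: order_trans)
qed

lemma herm_expansion_bounded_add:
  assumes "herm_expansion_bounded B\<^sub>1 D Q\<^sub>1" "herm_expansion_bounded B\<^sub>2 D Q\<^sub>2"
  shows "herm_expansion_bounded (B\<^sub>1 + B\<^sub>2) D (Q\<^sub>1 + Q\<^sub>2)"
proof -
  obtain b\<^sub>1 where b\<^sub>1: "\<forall>p>D. b\<^sub>1 p = 0" "\<And>p. \<bar>b\<^sub>1 p\<bar> \<le> B\<^sub>1"
      "Q\<^sub>1 = (\<Sum>p\<le>D. smult (b\<^sub>1 p) (herm p))"
    using assms(1) by (elim herm_expansion_boundedE) blast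
  obtain b\<^sub>2 where b\<^sub>2: "\<forall>p>D. b\<^sub>2 p = 0" "\<And>p. \<bar>b\<^sub>2 p\<bar> \<le> B\<^sub>2"
      "Q\<^sub>2 = (\<Sum>p\<le>D. smult (b\<^sub>2 p) (herm p))"
    using assms(2) by (elim herm_expansion_boundedE) blast
  show ?thesis
  proof (rule herm_expansion_boundedI[of D "\<lambda>p. b\<^sub>1 p + b\<^sub>2 p"])
    fix p
    show "\<bar>b\<^sub>1 p + b\<^sub>2 p\<bar> \<le> B\<^sub>1 + B\<^sub>2"
      using b\<^sub>1(2)[of p] b\<^sub>2(2)[of p] by linarith
  qed (use b\<^sub>1 b\<^sub>2 in \<open>auto simp: smult_add_left sum.distrib\<close>)
qed

lemma herm_expansion_bounded_smult:
  assumes "herm_expansion_bounded B D Q"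
  shows "herm_expansion_bounded (\<bar>a\<bar> * B) D (smult a Q)"
proof -
  obtain b where b: "\<forall>p>D. b p = 0" "\<And>p. \<bar>b p\<bar> \<le> B" "Q = (\<Sum>p\<le>D. smult (b p) (herm p))"
    using assms by (elim herm_expansion_boundedE) blast
  have "smult a Q = [:a:] * (\<Sum>p\<le>D. smult (b p) (herm p))"
    by (simp add: b(3))
  also have "\<dots> = (\<Sum>p\<le>D. smult (a * b p) (herm p))"
    by (simp add: sum_distrib_left mult.commute)
  finally have "smult a Q = (\<Sum>p\<le>D. smult (a * b p) (herm p))" .
  then show ?thesis
    using b by (intro herm_expansion_boundedI[of D "\<lambda>p. a * b p"])
      (auto simp: abs_mult mult_left_mono)
qed

lemma pX_mult_herm_expansion:
  assumes "\<forall>p>D. b p = 0"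
  shows "[:0, 1:] * (\<Sum>p\<le>D. smult (b p) (herm p))
    = (\<Sum>q\<le>Suc D. smult ((if q = 0 then 0 else b (q - 1)) + real (Suc q) * b (Suc q)) (herm q))"
proof -
  have "[:0, 1:] * (\<Sum>p\<le>D. smult (b p) (herm p))
      = (\<Sum>p\<le>D. smult (b p) (herm (Suc p))) + (\<Sum>p\<le>D. smult (b p * real p) (herm (p - 1)))"
    by (simp only: sum_distrib_left mult_smult_right pX_mult_herm smult_add_right sum.distrib
        smult_smult)
  also have "(\<Sum>p\<le>D. smult (b p) (herm (Suc p)))
      = (\<Sum>q\<le>Suc D. smult (if q = 0 then 0 else b (q - 1)) (herm q))"
    by (simp add: sum.atMost_Suc_shift del: sum.atMost_Suc)
  also have "(\<Sum>p\<le>D. smult (b p * real p) (herm (p - 1)))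
      = (\<Sum>p\<le>Suc (Suc D). smult (b p * real p) (herm (p - 1)))"
    by (rule sum.mono_neutral_left) (use assms in auto)
  also have "\<dots> = (\<Sum>q\<le>Suc D. smult (real (Suc q) * b (Suc q)) (herm q))"
    by (simp add: sum.atMost_Suc_shift[of _ "Suc D"] mult.commute del: sum.atMost_Suc)
  finally show ?thesis
    by (simp add: smult_add_left sum.distrib)
qed

lemma herm_expansion_bounded_pX_mult:
  assumes "herm_expansion_bounded B D Q"
  shows "herm_expansion_bounded ((real D + 1) * B) (Suc D) ([:0, 1:] * Q)"
proof -
  obtain b where b: "\<forall>p>D. b p = 0" "\<And>p. \<bar>b p\<bar> \<le> B" "Q = (\<Sum>p\<le>D. smult (b p) (herm p))"
    using assms by (elim herm_expansion_boundedE) blast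
  have B_nonneg: "0 \<le> B"
    using assms by (rule herm_expansion_bounded_nonneg)
  have shifted: "\<bar>if q = 0 then 0 else b (q - 1)\<bar> \<le> B" for q
    using b(2) B_nonneg by simp
  have lowered: "\<bar>real (Suc q) * b (Suc q)\<bar> \<le> real D * B" for q
  proof (cases "Suc q \<le> D")
    case True
    then have "real (Suc q) * \<bar>b (Suc q)\<bar> \<le> real D * B"
      using b(2) B_nonneg by (intro mult_mono) auto
    then show ?thesis
      by (simp add: abs_mult)
  next
    case False
    then show ?thesis
      using b(1) B_nonneg by simp
  qed
  show ?thesis
  proof (rule herm_expansion_boundedI)
    show "[:0, 1:] * Q = (\<Sum>q\<le>Suc D.
        smult ((if q = 0 then 0 else b (q - 1)) + real (Suc q) * b (Suc q)) (herm q))"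
      unfolding b(3) by (rule pX_mult_herm_expansion[OF b(1)])
    show "\<bar>(if q = 0 then 0 else b (q - 1)) + real (Suc q) * b (Suc q)\<bar> \<le> (real D + 1) * B" for q
      using shifted[of q] lowered[of q] by (simp add: algebra_simps)
  qed (use b(1) in simp)
qed

lemma herm_expansion_bounded_herm_mult:
  assumes "herm_expansion_bounded B D Q" "D + m \<le> L"
  shows "herm_expansion_bounded ((2 * real L) ^ m * B) (D + m) (herm m * Q)"
  using assms(2)
proof (induction m rule: herm.induct)
  case 1
  then show ?case using assms(1) by simp
next
  case 2
  have "(real D + 1) * B \<le> 2 * real L * B"
    using 2 herm_expansion_bounded_nonneg[OF assms(1)] by (intro mult_right_mono) auto
  then show ?case
    using herm_expansion_bounded_pX_mult[OF assms(1)] herm_expansion_bounded_mono by fastforce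
next
  case (3 n)
  define T where "T = 2 * real L"
  have IH_Suc: "herm_expansion_bounded (T ^ Suc n * B) (D + Suc n) (herm (Suc n) * Q)"
    and IH: "herm_expansion_bounded (T ^ n * B) (D + n) (herm n * Q)"
    using 3 by (simp_all add: T_def)
  have B_Suc: "0 \<le> T ^ Suc n * B" and B_n: "0 \<le> T ^ n * B"
    using herm_expansion_bounded_nonneg[OF IH_Suc] herm_expansion_bounded_nonneg[OF IH] .
  have "herm_expansion_bounded ((real (D + Suc n) + 1) * (T ^ Suc n * B)) (D + Suc (Suc n))
      ([:0, 1:] * (herm (Suc n) * Q))"
    using herm_expansion_bounded_pX_mult[OF IH_Suc] by simp
  then have raised: "herm_expansion_bounded (real L * (T ^ Suc n * B)) (D + Suc (Suc n))
      ([:0, 1:] * (herm (Suc n) * Q))"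
    by (rule herm_expansion_bounded_mono) (use 3(3) B_Suc in \<open>auto intro: mult_right_mono\<close>)
  have "herm_expansion_bounded (real (Suc n) * (T ^ n * B)) (D + n)
      (smult (- real (Suc n)) (herm n * Q))"
    using herm_expansion_bounded_smult[OF IH, of "- real (Suc n)"] by (simp add: add.commute)
  then have lowered: "herm_expansion_bounded (real L * (T ^ n * B)) (D + Suc (Suc n))
      (smult (- real (Suc n)) (herm n * Q))"
    by (rule herm_expansion_bounded_mono) (use 3(3) B_n in \<open>auto intro: mult_right_mono\<close>)
  have "herm (Suc (Suc n)) * Q
      = [:0, 1:] * (herm (Suc n) * Q) + smult (- real (Suc n)) (herm n * Q)"
    by (simp only: herm.simps distrib_right minus_mult_left[symmetric] mult.assoc mult_smult_left
        smult_minus_left diff_conv_add_uminus)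
  then have "herm_expansion_bounded (real L * (T ^ Suc n * B) + real L * (T ^ n * B))
      (D + Suc (Suc n)) (herm (Suc (Suc n)) * Q)"
    using herm_expansion_bounded_add[OF raised lowered] by simp
  moreover have "real L * (T ^ Suc n * B) + real L * (T ^ n * B) \<le> T ^ Suc (Suc n) * B"
  proof -
    have "real L * T + real L \<le> T * T"
      using 3(3) by (simp add: T_def algebra_simps)
    then have "(real L * T + real L) * (T ^ n * B) \<le> (T * T) * (T ^ n * B)"
      using B_n by (rule mult_right_mono)
    then show ?thesis
      by (simp add: algebra_simps)
  qed
  ultimately show ?case
    by (simp add: T_def herm_expansion_bounded_mono)
qed

lemma herm_expansion_bounded_prod_list:
  assumes "herm_expansion_bounded B D Q" "D + sum_list ms \<le> L"
  shows "herm_expansion_bounded ((2 * real L) ^ sum_list ms * B) (D + sum_list ms)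
    (prod_list (map herm ms) * Q)"
  using assms(2)
proof (induction ms)
  case Nil
  then show ?case using assms(1) by simp
next
  case (Cons m ms)
  then have "herm_expansion_bounded ((2 * real L) ^ m * ((2 * real L) ^ sum_list ms * B))
      (D + sum_list ms + m) (herm m * (prod_list (map herm ms) * Q))"
    by (intro herm_expansion_bounded_herm_mult) simp_all
  then show ?case
    by (simp add: power_add algebra_simps)
qed

lemma herm_expansion_bounded_coeff:
  assumes "herm_expansion_bounded B D Q" "\<forall>p>N. c p = 0" "Q = (\<Sum>p\<le>N. smult (c p) (herm p))"
  shows "\<bar>c p\<bar> \<le> B"
proof -
  obtain b where b: "\<forall>p>D. b p = 0" "\<And>p. \<bar>b p\<bar> \<le> B" "Q = (\<Sum>p\<le>D. smult (b p) (herm p))"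
    using assms(1) by (elim herm_expansion_boundedE) blast
  define K where "K = max N D"
  have "(\<Sum>p\<le>K. smult (c p) (herm p)) = (\<Sum>p\<le>K. smult (b p) (herm p))"
    using herm_expansion_extend[OF assms(2), where D' = K] herm_expansion_extend[OF b(1), where D' = K]
    by (simp add: K_def flip: assms(3) b(3))
  then have "(\<Sum>p\<le>K. smult (c p - b p) (herm p)) = 0"
    by (simp add: smult_diff_left sum_subtractf)
  then have "c p = b p"
    using herm_expansion_eq_0[of "\<lambda>p. c p - b p" K p] assms(2) b(1)
    by (cases "p \<le> K") (auto simp: K_def)
  then show ?thesis
    using b(2) by simp
qed

theorem proposition5p8:
  fixes l :: "nat list" and c :: "nat \<Rightarrow> real" and N :: nat
  assumes "sorted l"
    and "sum_list l \<ge> 1"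
    and "\<forall>p>N. c p = 0"
    and "prod_list (map herm l) = (\<Sum>p\<le>N. smult (c p) (herm p))"
  shows "\<forall>p. \<bar>c p\<bar> \<le> real (2 * sum_list l) ^ (sum_list l - last l)"
proof
  fix p
  obtain ms m where l: "l = ms @ [m]"
    using assms(2) by (cases l rule: rev_exhaust) auto
  have "herm_expansion_bounded ((2 * real (sum_list l)) ^ sum_list ms * 1) (m + sum_list ms)
      (prod_list (map herm ms) * herm m)"
    using herm_expansion_bounded_herm by (rule herm_expansion_bounded_prod_list) (simp add: l)
  then have "herm_expansion_bounded (real (2 * sum_list l) ^ (sum_list l - last l)) (sum_list l)
      (prod_list (map herm l))"
    by (simp add: l add.commute mult.commute)
  then show "\<bar>c p\<bar> \<le> real (2 * sum_list l) ^ (sum_list l - last l)"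
    using assms(3,4) by (rule herm_expansion_bounded_coeff)
qed

end
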